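(* Let $\mathfrak{n}$ be the real $7$-dimensional Lie algebra with basis $e_1,\dots,e_7$ whose nonzero brackets (up to antisymmetry) are $[e_1,e_2]=e_3$, $[e_1,e_3]=e_4$, $[e_1,e_4]=e_6$, $[e_1,e_5]=e_7$, $[e_1,e_6]=e_7$, $[e_2,e_3]=e_5$, $[e_2,e_4]=e_7$. Then $\mathfrak{n}$ is an Einstein nilradical.
   Context: A real nilpotent Lie algebra $\mathfrak{n}$ is called an Einstein nilradical if it admits an inner product such that the left-invariant Riemannian metric it defines on the simply connected nilpotent Lie group with Lie algebra $\mathfrak{n}$ is a nilsoliton, i.e. its Ricci operator satisfies $\mathrm{Ric}=c\,\mathrm{Id}+D$ for some $c\in\mathbb{R}$ and some derivation $D$ of $\mathfrak{n}$. Brackets of basis elements not listed are zero. *)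

theory Defs
  imports "HOL-Analysis.Analysis"
begin

datatype idx = E1 | E2 | E3 | E4 | E5 | E6 | E7

instance idx :: finite
proof
  have "UNIV = {E1, E2, E3, E4, E5, E6, E7}"
    by (auto intro: idx.exhaust)
  then show "finite (UNIV :: idx set)" by (metis finite.emptyI finite.insertI)
qed

type_synonym vec7 = "real ^ idx"

definition e :: "idx \<Rightarrow> vec7" where "e i = axis i 1"

fun up :: "idx \<Rightarrow> idx \<Rightarrow> vec7" where
  "up E1 E2 = e E3"
| "up E1 E3 = e E4"
| "up E1 E4 = e E6"
| "up E1 E5 = e E7"
| "up E1 E6 = e E7"
| "up E2 E3 = e E5"
| "up E2 E4 = e E7"
| "up _ _ = 0"

definition basis_br :: "idx \<Rightarrow> idx \<Rightarrow> vec7" where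
  "basis_br i j = up i j - up j i"

definition br :: "vec7 \<Rightarrow> vec7 \<Rightarrow> vec7" where
  "br x y = (\<Sum>i\<in>UNIV. \<Sum>j\<in>UNIV. (x $ i * y $ j) *\<^sub>R basis_br i j)"

definition is_inner_product :: "(vec7 \<Rightarrow> vec7 \<Rightarrow> real) \<Rightarrow> bool" where
  "is_inner_product g \<longleftrightarrow> bilinear g \<and> (\<forall>x y. g x y = g y x) \<and> (\<forall>x. x \<noteq> 0 \<longrightarrow> g x x > 0)"

definition is_orthonormal_basis :: "(vec7 \<Rightarrow> vec7 \<Rightarrow> real) \<Rightarrow> (idx \<Rightarrow> vec7) \<Rightarrow> bool" where
  "is_orthonormal_basis g b \<longleftrightarrow> (\<forall>i j. g (b i) (b j) = (if i = j then 1 else 0))"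

definition is_derivation :: "(vec7 \<Rightarrow> vec7) \<Rightarrow> bool" where
  "is_derivation D \<longleftrightarrow> linear D \<and> (\<forall>x y. D (br x y) = br (D x) y + br x (D y))"

text \<open>Ricci form of the left-invariant metric g on the nilpotent Lie group,
  computed in a g-orthonormal basis b (standard formula for nilpotent Lie algebras):
  g(Ric x, y) = -1/2 sum_{i,j} g([x,b_i],b_j) g([y,b_i],b_j)
              + 1/4 sum_{i,j} g([b_i,b_j],x) g([b_i,b_j],y).\<close>
definition ric_form :: "(vec7 \<Rightarrow> vec7 \<Rightarrow> real) \<Rightarrow> (idx \<Rightarrow> vec7) \<Rightarrow> vec7 \<Rightarrow> vec7 \<Rightarrow> real" where
  "ric_form g b x y =
     - (1/2) * (\<Sum>i\<in>UNIV. \<Sum>j\<in>UNIV. g (br x (b i)) (b j) * g (br y (b i)) (b j))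
     + (1/4) * (\<Sum>i\<in>UNIV. \<Sum>j\<in>UNIV. g (br (b i) (b j)) x * g (br (b i) (b j)) y)"

definition ricci :: "(vec7 \<Rightarrow> vec7 \<Rightarrow> real) \<Rightarrow> (idx \<Rightarrow> vec7) \<Rightarrow> vec7 \<Rightarrow> vec7" where
  "ricci g b x = (\<Sum>k\<in>UNIV. ric_form g b x (b k) *\<^sub>R b k)"

end

theory Submission
  imports Defs
begin

text \<open>Every bracket of n is homogeneous for the grading with weights 1, 2, 3, 4, 5, 5, 6
  on \<open>e\<^sub>1, \<dots>, e\<^sub>7\<close>, so an operator acting on a basis adapted to this grading with
  eigenvalues proportional to the weights is a derivation. In the coordinates of an orthonormal
  basis the Ricci form is a quadratic expression in the structure constants. Rescaling the
  \<open>e\<^sub>i\<close> and rotating inside the weight-5 component \<open>\<langle>e\<^sub>5, e\<^sub>6\<rangle>\<close> yields a basis whose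
  structure constants make this Ricci operator diagonal with eigenvalues \<open>-29 + 13/2 \<cdot> weight\<close>;
  declaring that basis orthonormal gives a nilsoliton metric with \<open>Ric = -29 Id + D\<close>, where
  \<open>D\<close> is \<open>13/2\<close> times the grading derivation.\<close>

lemma UNIV_idx: "(UNIV :: idx set) = {E1, E2, E3, E4, E5, E6, E7}"
  by (auto intro: idx.exhaust)

lemma sum_UNIV_idx: "(\<Sum>k\<in>UNIV. f k) = f E1 + f E2 + f E3 + f E4 + f E5 + f E6 + f E7"
  by (simp add: UNIV_idx algebra_simps)

lemma all_idx: "(\<forall>k :: idx. P k) \<longleftrightarrow> P E1 \<and> P E2 \<and> P E3 \<and> P E4 \<and> P E5 \<and> P E6 \<and> P E7"
  by (metis idx.exhaust)

lemma bilinear_br: "bilinear br"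
  unfolding bilinear_def br_def
  by (auto intro!: linearI simp: algebra_simps sum.distrib scaleR_sum_right)

lemma br_e: "br (e i) (e j) = basis_br i j"
proof -
  have scale_indicator: "(if P then 1 else 0) *\<^sub>R v = (if P then v else 0)" for P and v :: vec7
    by simp
  have "br (e i) (e j) =
      (\<Sum>k\<in>UNIV. if k = i then (\<Sum>l\<in>UNIV. if l = j then basis_br k l else 0) else 0)"
    unfolding br_def e_def
    by (intro sum.cong refl) (auto simp: axis_def scale_indicator intro!: sum.neutral)
  then show ?thesis
    by simp
qed

lemma sum_swap3:
  "(\<Sum>i\<in>A. \<Sum>j\<in>B. (\<Sum>k\<in>C. f k i j) * g i j) = (\<Sum>k\<in>C. \<Sum>i\<in>A. \<Sum>j\<in>B. f k i j * (g i j :: real))"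
proof -
  have "(\<Sum>i\<in>A. \<Sum>j\<in>B. (\<Sum>k\<in>C. f k i j) * g i j) = (\<Sum>i\<in>A. \<Sum>k\<in>C. \<Sum>j\<in>B. f k i j * g i j)"
    by (simp add: sum_distrib_right sum.swap[of _ B C])
  also have "\<dots> = (\<Sum>k\<in>C. \<Sum>i\<in>A. \<Sum>j\<in>B. f k i j * g i j)"
    by (rule sum.swap)
  finally show ?thesis .
qed

locale coordinate_basis =
  fixes b :: "idx \<Rightarrow> vec7" and coord :: "vec7 \<Rightarrow> vec7"
  assumes linear_coord: "linear coord"
    and coord_basis: "coord (b i) = axis i 1"
    and basis_expansion: "(\<Sum>k\<in>UNIV. coord x $ k *\<^sub>R b k) = x"
begin

definition metric :: "vec7 \<Rightarrow> vec7 \<Rightarrow> real" where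
  "metric x y = coord x \<bullet> coord y"

definition struct_const :: "idx \<Rightarrow> idx \<Rightarrow> vec7" where
  "struct_const i j = coord (br (b i) (b j))"

definition ricci_coeff :: "idx \<Rightarrow> idx \<Rightarrow> real" where
  "ricci_coeff k m =
     - (1/2) * (\<Sum>i\<in>UNIV. \<Sum>j\<in>UNIV. struct_const k i $ j * struct_const m i $ j)
     + (1/4) * (\<Sum>i\<in>UNIV. \<Sum>j\<in>UNIV. struct_const i j $ k * struct_const i j $ m)"

definition diag :: "(idx \<Rightarrow> real) \<Rightarrow> vec7 \<Rightarrow> vec7" where
  "diag w x = (\<Sum>m\<in>UNIV. (w m * coord x $ m) *\<^sub>R b m)"

lemma is_inner_product_metric: "is_inner_product metric"
proof -
  interpret coord: linear coord by (rule linear_coord)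
  have "bilinear metric"
    unfolding bilinear_def metric_def
    by (auto intro!: linearI simp: coord.add coord.scale inner_add_left inner_add_right)
  moreover have "metric x x > 0" if "x \<noteq> 0" for x
  proof -
    have "coord x \<noteq> 0"
      using that basis_expansion[of x] by auto
    then show ?thesis by (simp add: metric_def)
  qed
  ultimately show ?thesis
    unfolding is_inner_product_def by (simp add: metric_def inner_commute)
qed

lemma is_orthonormal_basis_metric: "is_orthonormal_basis metric b"
  unfolding is_orthonormal_basis_def metric_def by (simp add: coord_basis inner_axis_axis)

lemma metric_basis: "metric x (b j) = coord x $ j"
  by (simp add: metric_def coord_basis inner_axis)

lemma br_expand_left: "br x (b i) = (\<Sum>k\<in>UNIV. coord x $ k *\<^sub>R br (b k) (b i))"
proof -
  interpret br: linear "\<lambda>x. br x (b i)"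
    using bilinear_br by (simp add: bilinear_def)
  have "br x (b i) = br (\<Sum>k\<in>UNIV. coord x $ k *\<^sub>R b k) (b i)"
    by (simp only: basis_expansion)
  also have "\<dots> = (\<Sum>k\<in>UNIV. coord x $ k *\<^sub>R br (b k) (b i))"
    by (simp only: br.sum br.scale)
  finally show ?thesis .
qed

lemma ric_form_basis:
  "ric_form metric b x (b m) = (\<Sum>k\<in>UNIV. coord x $ k * ricci_coeff k m)"
proof -
  interpret coord: linear coord by (rule linear_coord)
  have sc: "metric (br (b i) (b j)) (b l) = struct_const i j $ l" for i j l
    by (simp add: metric_basis struct_const_def)
  have left: "metric (br x (b i)) (b j) = (\<Sum>k\<in>UNIV. coord x $ k * struct_const k i $ j)" for i j
    by (simp add: metric_basis br_expand_left[of x] coord.sum coord.scale struct_const_def)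
  have right: "metric (br (b i) (b j)) x = (\<Sum>k\<in>UNIV. struct_const i j $ k * coord x $ k)" for i j
    by (simp add: metric_def struct_const_def inner_vec_def)
  have "(\<Sum>i\<in>UNIV. \<Sum>j\<in>UNIV. metric (br x (b i)) (b j) * metric (br (b m) (b i)) (b j))
      = (\<Sum>k\<in>UNIV. coord x $ k * (\<Sum>i\<in>UNIV. \<Sum>j\<in>UNIV. struct_const k i $ j * struct_const m i $ j))"
    unfolding sc left sum_swap3 by (simp add: sum_distrib_left mult.assoc)
  moreover have "(\<Sum>i\<in>UNIV. \<Sum>j\<in>UNIV. metric (br (b i) (b j)) x * metric (br (b i) (b j)) (b m))
      = (\<Sum>k\<in>UNIV. coord x $ k * (\<Sum>i\<in>UNIV. \<Sum>j\<in>UNIV. struct_const i j $ k * struct_const i j $ m))"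
    unfolding sc right sum_swap3 by (simp add: sum_distrib_left mult_ac)
  ultimately show ?thesis
    unfolding ric_form_def ricci_coeff_def
    by (simp add: sum_distrib_left sum.distrib algebra_simps flip: sum_distrib_right)
qed

lemma linear_diag: "linear (diag w)"
proof -
  interpret coord: linear coord by (rule linear_coord)
  show ?thesis
    by (rule linearI)
      (simp_all add: diag_def coord.add coord.scale algebra_simps sum.distrib
        scaleR_sum_right)
qed

lemma diag_basis: "diag w (b i) = w i *\<^sub>R b i"
  by (simp add: diag_def coord_basis axis_def if_distrib[of "\<lambda>c. _ * c"]
      if_distrib[of "\<lambda>c. c *\<^sub>R _"] cong: if_cong)

lemma diag_shift: "diag (\<lambda>m. c + w m) x = c *\<^sub>R x + diag w x"
proof -
  have "diag (\<lambda>m. c + w m) x = c *\<^sub>R (\<Sum>m\<in>UNIV. coord x $ m *\<^sub>R b m) + diag w x"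
    by (simp add: diag_def algebra_simps sum.distrib scaleR_sum_right)
  then show ?thesis
    by (simp only: basis_expansion)
qed

lemma ricci_eq_diag:
  assumes "\<And>k m. ricci_coeff k m = (if k = m then r m else 0)"
  shows "ricci metric b x = diag r x"
  by (simp add: ricci_def ric_form_basis assms diag_def if_distrib[of "\<lambda>c. _ * c"] mult.commute
      cong: if_cong)

lemma derivation_diag:
  assumes graded: "\<And>i j m. struct_const i j $ m \<noteq> 0 \<Longrightarrow> w m = w i + w j"
  shows "is_derivation (diag w)"
proof -
  interpret D: linear "diag w" by (rule linear_diag)
  have "UNIV \<subseteq> span (range b)"
  proof
    fix x :: vec7
    have "(\<Sum>k\<in>UNIV. coord x $ k *\<^sub>R b k) \<in> span (range b)"
      by (intro span_sum span_mul span_base) simp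
    then show "x \<in> span (range b)"
      by (simp only: basis_expansion)
  qed
  moreover have "diag w (br (b i) (b j)) = br (diag w (b i)) (b j) + br (b i) (diag w (b j))" for i j
  proof -
    have weight: "w m * struct_const i j $ m = (w i + w j) * struct_const i j $ m" for m
      using graded[of i j m] by (cases "struct_const i j $ m = 0") simp_all
    have "diag w (br (b i) (b j)) = (\<Sum>m\<in>UNIV. ((w i + w j) * struct_const i j $ m) *\<^sub>R b m)"
      unfolding diag_def struct_const_def[symmetric] by (simp only: weight)
    also have "\<dots> = (w i + w j) *\<^sub>R (\<Sum>m\<in>UNIV. struct_const i j $ m *\<^sub>R b m)"
      by (simp add: scaleR_sum_right)
    also have "\<dots> = (w i + w j) *\<^sub>R br (b i) (b j)"
      by (simp only: struct_const_def basis_expansion)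
    finally show ?thesis
      by (simp add: diag_basis bilinear_lmul[OF bilinear_br] bilinear_rmul[OF bilinear_br]
          scaleR_add_left)
  qed
  moreover have "bilinear (\<lambda>x y. diag w (br x y))"
    by (auto simp: bilinear_def linear_iff bilinear_ladd[OF bilinear_br] bilinear_radd[OF bilinear_br]
        bilinear_lmul[OF bilinear_br] bilinear_rmul[OF bilinear_br] D.add D.scale)
  moreover have "bilinear (\<lambda>x y. br (diag w x) y + br x (diag w y))"
    by (auto simp: bilinear_def linear_iff bilinear_ladd[OF bilinear_br] bilinear_radd[OF bilinear_br]
        bilinear_lmul[OF bilinear_br] bilinear_rmul[OF bilinear_br] D.add D.scale algebra_simps)
  \<comment> \<open>both sides are bilinear in \<open>(x, y)\<close>, so agreement on basis pairs suffices\<close>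
  ultimately have "diag w (br x y) = br (diag w x) y + br x (diag w y)" for x y
    using bilinear_eq[of "\<lambda>x y. diag w (br x y)" "\<lambda>x y. br (diag w x) y + br x (diag w y)"
        UNIV "range b" UNIV "range b" x y]
    by auto
  then show ?thesis
    unfolding is_derivation_def using linear_diag by blast
qed

end

text \<open>Opaque names for the square roots keep the simplifier from merging their products
  (e.g. into \<open>sqrt 14\<close>); the computations below only need their squares.\<close>

definition r2 :: real where "r2 = sqrt 2"
definition r7 :: real where "r7 = sqrt 7"
definition r11 :: real where "r11 = sqrt 11"

lemma r_squares:
  "r2 * r2 = 2" "r2 * (r2 * z) = 2 * z"
  "r7 * r7 = 7" "r7 * (r7 * z) = 7 * z"
  "r11 * r11 = 11" "r11 * (r11 * z) = 11 * z"
  by (simp_all add: r2_def r7_def r11_def)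

fun soliton_basis :: "idx \<Rightarrow> vec7" where
  "soliton_basis E1 = e E1"
| "soliton_basis E2 = (r2/4) *\<^sub>R e E2"
| "soliton_basis E3 = (r2/12) *\<^sub>R e E3"
| "soliton_basis E4 = (r7/84) *\<^sub>R e E4"
| "soliton_basis E5 = (7/11088*r2*r7*r11) *\<^sub>R e E5 + (4/11088*r2*r7*r11) *\<^sub>R e E6"
| "soliton_basis E6 = (-1/924*r7*r11) *\<^sub>R e E5 + (1/924*r7*r11) *\<^sub>R e E6"
| "soliton_basis E7 = (1/1008*r2*r7) *\<^sub>R e E7"

text \<open>\<open>coord_e k\<close> are the coordinates of \<open>e k\<close> with respect to \<open>soliton_basis\<close>, i.e. the columns
  of the inverse change of basis.\<close>

fun coord_e :: "idx \<Rightarrow> vec7" where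
  "coord_e E1 = axis E1 1"
| "coord_e E2 = (2*r2) *\<^sub>R axis E2 1"
| "coord_e E3 = (6*r2) *\<^sub>R axis E3 1"
| "coord_e E4 = (12*r7) *\<^sub>R axis E4 1"
| "coord_e E5 = (72/11*r2*r7*r11) *\<^sub>R axis E5 1 - (48/11*r7*r11) *\<^sub>R axis E6 1"
| "coord_e E6 = (72/11*r2*r7*r11) *\<^sub>R axis E5 1 + (84/11*r7*r11) *\<^sub>R axis E6 1"
| "coord_e E7 = (72*r2*r7) *\<^sub>R axis E7 1"

definition soliton_coord :: "vec7 \<Rightarrow> vec7" where
  "soliton_coord x = (\<Sum>k\<in>UNIV. x $ k *\<^sub>R coord_e k)"

fun soliton_bracket_up :: "idx \<Rightarrow> idx \<Rightarrow> vec7" where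
  "soliton_bracket_up E1 E2 = 3 *\<^sub>R axis E3 1"
| "soliton_bracket_up E1 E3 = (r2*r7) *\<^sub>R axis E4 1"
| "soliton_bracket_up E1 E4 = (6/11*r2*r11) *\<^sub>R axis E5 1 + (7/11*r11) *\<^sub>R axis E6 1"
| "soliton_bracket_up E1 E5 = r11 *\<^sub>R axis E7 1"
| "soliton_bracket_up E2 E3 = (3/11*r2*r7*r11) *\<^sub>R axis E5 1 - (2/11*r7*r11) *\<^sub>R axis E6 1"
| "soliton_bracket_up E2 E4 = 3 *\<^sub>R axis E7 1"
| "soliton_bracket_up _ _ = 0"

definition soliton_bracket :: "idx \<Rightarrow> idx \<Rightarrow> vec7" where
  "soliton_bracket i j = soliton_bracket_up i j - soliton_bracket_up j i"

fun weight :: "idx \<Rightarrow> real" where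
  "weight E1 = 1" | "weight E2 = 2" | "weight E3 = 3" | "weight E4 = 4"
| "weight E5 = 5" | "weight E6 = 5" | "weight E7 = 6"

lemma linear_soliton_coord: "linear soliton_coord"
  by (rule linearI) (simp_all add: soliton_coord_def scaleR_add_left sum.distrib scaleR_sum_right)

lemma soliton_coord_e: "soliton_coord (e k) = coord_e k"
  by (simp add: soliton_coord_def e_def axis_def if_distrib[of "\<lambda>c. c *\<^sub>R _"] cong: if_cong)

lemmas soliton_coord_linear_simps =
  linear_add[OF linear_soliton_coord] linear_diff[OF linear_soliton_coord]
  linear_scale[OF linear_soliton_coord] linear_neg[OF linear_soliton_coord] linear_0[OF linear_soliton_coord]

lemma soliton_coord_basis: "soliton_coord (soliton_basis i) = axis i 1"
  by (cases i) (simp_all add: soliton_coord_linear_simps soliton_coord_e vec_eq_iff all_idx axis_def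
      algebra_simps r_squares)

lemma coord_e_expansion: "(\<Sum>k\<in>UNIV. coord_e l $ k *\<^sub>R soliton_basis k) = e l"
  by (cases l) (simp_all add: sum_UNIV_idx vec_eq_iff all_idx axis_def e_def algebra_simps r_squares)

lemma soliton_basis_expansion: "(\<Sum>k\<in>UNIV. soliton_coord x $ k *\<^sub>R soliton_basis k) = x"
proof -
  have "(\<Sum>k\<in>UNIV. soliton_coord x $ k *\<^sub>R soliton_basis k)
      = (\<Sum>k\<in>UNIV. \<Sum>l\<in>UNIV. (x $ l * coord_e l $ k) *\<^sub>R soliton_basis k)"
    by (simp add: soliton_coord_def scaleR_sum_left)
  also have "\<dots> = (\<Sum>l\<in>UNIV. \<Sum>k\<in>UNIV. (x $ l * coord_e l $ k) *\<^sub>R soliton_basis k)"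
    by (rule sum.swap)
  also have "\<dots> = (\<Sum>l\<in>UNIV. x $ l *\<^sub>R (\<Sum>k\<in>UNIV. coord_e l $ k *\<^sub>R soliton_basis k))"
    by (simp add: scaleR_sum_right)
  also have "\<dots> = x"
    using basis_expansion[of x] by (simp add: coord_e_expansion e_def scalar_mult_eq_scaleR)
  finally show ?thesis .
qed

interpretation soliton: coordinate_basis soliton_basis soliton_coord
  by (rule coordinate_basis.intro) (simp_all add: linear_soliton_coord soliton_coord_basis soliton_basis_expansion)

lemmas br_linear_simps =
  bilinear_ladd[OF bilinear_br] bilinear_radd[OF bilinear_br]
  bilinear_lsub[OF bilinear_br] bilinear_rsub[OF bilinear_br]
  bilinear_lmul[OF bilinear_br] bilinear_rmul[OF bilinear_br]

lemma soliton_struct_const: "soliton.struct_const i j = soliton_bracket i j"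
  unfolding soliton.struct_const_def
  by (cases i; cases j)
    (simp_all add: br_linear_simps br_e basis_br_def soliton_coord_linear_simps soliton_coord_e soliton_bracket_def
      vec_eq_iff all_idx axis_def algebra_simps r_squares)

lemma soliton_bracket_graded: "soliton_bracket i j $ m \<noteq> 0 \<Longrightarrow> weight m = weight i + weight j"
  by (cases i; cases j; cases m) (simp_all add: soliton_bracket_def axis_def)

lemma soliton_ricci_coeff: "soliton.ricci_coeff k m = (if k = m then -29 + 13/2 * weight m else 0)"
  unfolding soliton.ricci_coeff_def soliton_struct_const
  by (cases k; cases m) (simp_all add: sum_UNIV_idx soliton_bracket_def axis_def algebra_simps r_squares)

theorem mainTheorem11:
  shows "\<exists>g b c D. is_inner_product g \<and> is_orthonormal_basis g b \<and> is_derivation D \<and>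
           (\<forall>x. ricci g b x = c *\<^sub>R x + D x)"
proof (intro exI conjI allI)
  let ?D = "soliton.diag (\<lambda>m. 13/2 * weight m)"
  show "is_inner_product soliton.metric" by (rule soliton.is_inner_product_metric)
  show "is_orthonormal_basis soliton.metric soliton_basis" by (rule soliton.is_orthonormal_basis_metric)
  show "is_derivation ?D"
    by (rule soliton.derivation_diag) (simp add: soliton_struct_const soliton_bracket_graded)
  fix x
  have "ricci soliton.metric soliton_basis x = soliton.diag (\<lambda>m. -29 + 13/2 * weight m) x"
    by (rule soliton.ricci_eq_diag) (rule soliton_ricci_coeff)
  then show "ricci soliton.metric soliton_basis x = (-29) *\<^sub>R x + ?D x"
    by (simp only: soliton.diag_shift)
qed

end
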